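(* Let $n$ be even. Take $n$ oriented triangles, each labeled and identified with the standard oriented 2-simplex, and pair their $3n$ sides by a uniformly random perfect matching; glue each pair of sides by the unique identification compatible with the orientations, producing a closed oriented (possibly disconnected) surface $\Sigma$. Then the expected number of vertices of $\Sigma$ is at most $\tfrac{3}{2}\log(n)+6$ (natural logarithm).
   Context: This random gluing produces the uniform distribution on the set of labeled oriented triangulated surfaces built from $n$ triangles (triangulations here are just assemblages of triangles with sides glued in pairs, not necessarily simplicial complexes). The vertices of $\Sigma$ are the equivalence classes of triangle corners after gluing. *)

theory Defs
  imports Complex_Main
begin

text \<open>Triangles are labelled 0..n-1; triangle i is the standard oriented 2-simplex
  with corners (i,0),(i,1),(i,2). Its oriented sides are (i,j) for j<3, side (i,j)
  running from corner (i,j) to corner (i,(j+1) mod 3).\<close>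

definition tri_sides :: "nat \<Rightarrow> (nat \<times> nat) set" where
  "tri_sides n = {0..<n} \<times> {0..<3}"

definition tri_corners :: "nat \<Rightarrow> (nat \<times> nat) set" where
  "tri_corners n = {0..<n} \<times> {0..<3}"

text \<open>Perfect matchings of the 3n sides, as fixed-point-free involutions of the side set
  (extended by the identity outside, so that the set of matchings is finite).\<close>

definition side_matchings :: "nat \<Rightarrow> ((nat \<times> nat) \<Rightarrow> (nat \<times> nat)) set" where
  "side_matchings n = {m. (\<forall>s\<in>tri_sides n. m s \<in> tri_sides n \<and> m s \<noteq> s \<and> m (m s) = s)
                         \<and> (\<forall>s. s \<notin> tri_sides n \<longrightarrow> m s = s)}"

text \<open>Orientation-compatible gluing: side (i,j) (corner j \<rightarrow> j+1) is glued to side (k,l)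
  (corner l \<rightarrow> l+1) reversing direction, so corner (i,j) is identified with (k,l+1) and
  corner (i,j+1) with (k,l).\<close>

definition glue_rel :: "nat \<Rightarrow> ((nat \<times> nat) \<Rightarrow> (nat \<times> nat)) \<Rightarrow> ((nat \<times> nat) \<times> (nat \<times> nat)) set" where
  "glue_rel n m =
     {((i, j), (fst (m (i, j)), (snd (m (i, j)) + 1) mod 3)) | i j. (i, j) \<in> tri_sides n}
   \<union> {((i, (j + 1) mod 3), m (i, j)) | i j. (i, j) \<in> tri_sides n}"

definition surface_vertices :: "nat \<Rightarrow> ((nat \<times> nat) \<Rightarrow> (nat \<times> nat)) \<Rightarrow> (nat \<times> nat) set set" where
  "surface_vertices n m = tri_corners n // ((glue_rel n m \<union> (glue_rel n m)\<inverse>)\<^sup>*)"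

definition num_vertices :: "nat \<Rightarrow> ((nat \<times> nat) \<Rightarrow> (nat \<times> nat)) \<Rightarrow> nat" where
  "num_vertices n m = card (surface_vertices n m)"

definition expected_vertices :: "nat \<Rightarrow> real" where
  "expected_vertices n =
     (\<Sum>m\<in>side_matchings n. real (num_vertices n m)) / real (card (side_matchings n))"

end

(*
  The vertices of the glued surface are the cycles of the permutation next_side o m of the 3n
  sides, where next_side rotates the sides of every triangle and m is the matching. For a
  permutation rho of a set S of size 2N and a uniformly random matching m, condition on the
  partner t = m s of a fixed element s. Writing m = transpose s t o m' with m' a matching of
  S - {s, t}, the cycles of rho o m are those of a permutation of S - {s, t}, obtained by cutting
  s and t out of the cycles of rho o transpose s t, together with at most two cycles inside
  {s, t}. How often such a cycle closes is governed by the fixed points of rho; choosing s to be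
  a fixed point of rho whenever there is one, induction on N gives the bound
  3 H_N + F(rho) / 2 on the expected number of cycles, where H_N = sum_{k<N} 1/(2k+1) and F(rho)
  is the number of fixed points. For the triangles F = 0 and N = 3n/2, and
  H_N <= 1 + ln (2N - 1) / 2 by comparison with an integral.
*)

theory Submission
  imports Defs "HOL-Combinatorics.Transposition"
begin

section \<open>Cycles of a function\<close>

definition graph_on :: "'a set \<Rightarrow> ('a \<Rightarrow> 'a) \<Rightarrow> 'a rel" where
  "graph_on S f = {(x, f x) | x. x \<in> S}"

definition cycle_rel :: "'a set \<Rightarrow> ('a \<Rightarrow> 'a) \<Rightarrow> 'a rel" where
  "cycle_rel S f = (graph_on S f \<union> (graph_on S f)\<inverse>)\<^sup>*"

definition cycle_count :: "'a set \<Rightarrow> ('a \<Rightarrow> 'a) \<Rightarrow> nat" where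
  "cycle_count S f = card (S // cycle_rel S f)"

lemma cycle_count_cong:
  assumes "\<And>x. x \<in> S \<Longrightarrow> f x = g x"
  shows "cycle_count S f = cycle_count S g"
proof -
  have "graph_on S f = graph_on S g"
    using assms unfolding graph_on_def by auto
  thus ?thesis
    by (simp add: cycle_count_def cycle_rel_def)
qed

lemma equiv_cycle_rel: "equiv UNIV (cycle_rel S f)"
  unfolding cycle_rel_def equiv_def
  by (auto simp: refl_rtrancl trans_rtrancl sym_rtrancl sym_Un_converse)

lemma cycle_rel_refl [simp]: "(x, x) \<in> cycle_rel S f"
  by (simp add: cycle_rel_def)

lemma cycle_rel_sym: "(x, y) \<in> cycle_rel S f \<Longrightarrow> (y, x) \<in> cycle_rel S f"
  using equiv_cycle_rel[of S f] unfolding equiv_def by (blast elim: symE)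

lemma cycle_rel_trans: "(x, y) \<in> cycle_rel S f \<Longrightarrow> (y, z) \<in> cycle_rel S f \<Longrightarrow> (x, z) \<in> cycle_rel S f"
  using equiv_cycle_rel[of S f] unfolding equiv_def by (blast elim: transE)

lemma cycle_rel_step: "x \<in> S \<Longrightarrow> (x, f x) \<in> cycle_rel S f"
  unfolding cycle_rel_def graph_on_def by auto

lemma cycle_rel_least:
  assumes "equiv UNIV Q" and "\<And>x. x \<in> S \<Longrightarrow> (x, f x) \<in> Q"
  shows "cycle_rel S f \<subseteq> Q"
proof -
  have "graph_on S f \<union> (graph_on S f)\<inverse> \<subseteq> Q"
    using assms unfolding graph_on_def equiv_def sym_def by blast
  hence "cycle_rel S f \<subseteq> Q\<^sup>*"
    unfolding cycle_rel_def by (rule rtrancl_mono)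
  also have "Q\<^sup>* = Q"
    using assms(1) by (auto simp: rtrancl_trancl_reflcl trancl_id equiv_def refl_on_def)
  finally show ?thesis .
qed

lemma cycle_rel_closed:
  assumes "f ` S \<subseteq> S" and "(x, y) \<in> cycle_rel S f"
  shows "x = y \<or> x \<in> S \<and> y \<in> S"
  using assms(2) unfolding cycle_rel_def
  by (induction rule: rtrancl_induct) (use assms(1) in \<open>auto simp: graph_on_def\<close>)

lemma quotient_eq_image: "A // r = (\<lambda>x. r `` {x}) ` A"
  by (auto simp: quotient_def)

lemma card_image_eq_if_same_kernel:
  assumes "\<And>x y. x \<in> A \<Longrightarrow> y \<in> A \<Longrightarrow> F x = F y \<longleftrightarrow> G x = G y"
  shows "card (F ` A) = card (G ` A)"
proof -
  let ?\<phi> = "\<lambda>X. G (inv_into A F X)"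
  have \<phi>: "?\<phi> (F x) = G x" if "x \<in> A" for x
    using that by (simp add: assms[symmetric] f_inv_into_f inv_into_into)
  have "inj_on ?\<phi> (F ` A)"
    by (rule inj_onI) (auto simp: assms[symmetric] f_inv_into_f inv_into_into)
  moreover have "?\<phi> ` F ` A = G ` A"
    using \<phi> by (simp add: image_image)
  ultimately show ?thesis
    by (metis card_image)
qed

definition bypass :: "'a \<Rightarrow> ('a \<Rightarrow> 'a) \<Rightarrow> 'a \<Rightarrow> 'a" where
  "bypass s f x = (if f x = s then f s else f x)"

lemma bypass_comp: "h s = s \<Longrightarrow> bypass s (g \<circ> h) = bypass s g \<circ> h"
  by (auto simp: bypass_def)

lemma bij_betw_bypass:
  assumes f: "bij_betw f S S" and s: "s \<in> S"
  shows "bij_betw (bypass s f) (S - {s}) (S - {s})"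
proof -
  have inj: "inj_on f S" and img: "f ` S = S"
    using f by (auto simp: bij_betw_def)
  have "inj_on (bypass s f) (S - {s})"
    using inj s by (auto simp: inj_on_def bypass_def split: if_splits)
  moreover have "bypass s f ` (S - {s}) = S - {s}"
  proof
    show "bypass s f ` (S - {s}) \<subseteq> S - {s}"
      using inj img s by (auto simp: bypass_def inj_on_def)
    show "S - {s} \<subseteq> bypass s f ` (S - {s})"
    proof
      fix y assume y: "y \<in> S - {s}"
      then obtain x where x: "x \<in> S" "y = f x"
        using img by auto
      show "y \<in> bypass s f ` (S - {s})"
      proof (cases "x = s")
        case True
        obtain x' where "x' \<in> S" "f x' = s"
          using img s by (metis imageE)
        thus ?thesis
          using x y True by (auto simp: bypass_def image_iff intro!: bexI[of _ x'])
      next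
        case False
        thus ?thesis
          using x y by (auto simp: bypass_def image_iff intro!: bexI[of _ x])
      qed
    qed
  qed
  ultimately show ?thesis
    by (simp add: bij_betw_def)
qed

lemma cycle_count_bypass_fixpoint:
  assumes fin: "finite S" and f: "bij_betw f S S" and s: "s \<in> S" and fs: "f s = s"
  shows "cycle_count S f = Suc (cycle_count (S - {s}) (bypass s f))"
proof -
  let ?S' = "S - {s}"
  let ?R = "cycle_rel ?S' f"
  have inj: "inj_on f S" and fS: "f ` ?S' \<subseteq> ?S'"
    using f fs s by (auto simp: bij_betw_def inj_on_def)
  have "cycle_count ?S' (bypass s f) = cycle_count ?S' f"
    using inj fs s by (intro cycle_count_cong) (auto simp: bypass_def inj_on_def)
  moreover have "cycle_rel S f = ?R"
  proof -
    have "graph_on S f \<union> (graph_on S f)\<inverse> = insert (s, s) (graph_on ?S' f \<union> (graph_on ?S' f)\<inverse>)"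
      using s fs by (auto simp: graph_on_def)
    thus ?thesis
      unfolding cycle_rel_def by (auto simp: rtrancl_insert intro: rtrancl_trans)
  qed
  moreover have "?R `` {s} = {s}"
    using cycle_rel_closed[OF fS] by auto
  moreover have "S // ?R = insert (?R `` {s}) (?S' // ?R)"
    using s by (auto simp: quotient_def)
  moreover have "{s} \<notin> ?S' // ?R"
  proof
    assume "{s} \<in> ?S' // ?R"
    then obtain x where "x \<in> ?S'" and "{s} = ?R `` {x}"
      by (rule quotientE)
    moreover have "x \<in> ?R `` {x}"
      by simp
    ultimately show False
      by blast
  qed
  moreover have "finite (?S' // ?R)"
    using fin by (simp add: quotient_eq_image)
  ultimately show ?thesis
    by (simp add: cycle_count_def)
qed

lemma cycle_rel_bypass_moved:
  assumes s: "s \<in> S" and fs: "f s \<noteq> s" and "x \<noteq> s" and "y \<noteq> s"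
  shows "(x, y) \<in> cycle_rel (S - {s}) (bypass s f) \<longleftrightarrow> (x, y) \<in> cycle_rel S f"
proof
  show "(x, y) \<in> cycle_rel S f" if "(x, y) \<in> cycle_rel (S - {s}) (bypass s f)"
  proof -
    have "cycle_rel (S - {s}) (bypass s f) \<subseteq> cycle_rel S f"
    proof (rule cycle_rel_least[OF equiv_cycle_rel])
      fix x assume "x \<in> S - {s}"
      hence "(x, f x) \<in> cycle_rel S f" and "(s, f s) \<in> cycle_rel S f"
        using s by (auto intro: cycle_rel_step)
      thus "(x, bypass s f x) \<in> cycle_rel S f"
        by (auto simp: bypass_def intro: cycle_rel_trans)
    qed
    thus ?thesis
      using that by blast
  qed
next
  define h where "h = id(s := f s)"
  have "cycle_rel S f \<subseteq> inv_image (cycle_rel (S - {s}) (bypass s f)) h"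
  proof (rule cycle_rel_least)
    show "equiv UNIV (inv_image (cycle_rel (S - {s}) (bypass s f)) h)"
      using equiv_cycle_rel[of "S - {s}" "bypass s f"]
      by (auto simp: equiv_def refl_on_def sym_inv_image trans_inv_image)
    fix x assume "x \<in> S"
    thus "(x, f x) \<in> inv_image (cycle_rel (S - {s}) (bypass s f)) h"
      using fs cycle_rel_step[of x "S - {s}" "bypass s f"]
      by (cases "x = s") (auto simp: h_def bypass_def)
  qed
  thus "(x, y) \<in> cycle_rel S f \<Longrightarrow> (x, y) \<in> cycle_rel (S - {s}) (bypass s f)"
    using assms by (auto simp: h_def)
qed

lemma cycle_count_bypass_moved:
  assumes f: "bij_betw f S S" and s: "s \<in> S" and fs: "f s \<noteq> s"
  shows "cycle_count S f = cycle_count (S - {s}) (bypass s f)"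
proof -
  let ?R = "cycle_rel S f" and ?R' = "cycle_rel (S - {s}) (bypass s f)"
  define h where "h = id(s := f s)"
  have "f s \<in> S"
    using f s by (auto simp: bij_betw_def)
  hence hS: "h ` S = S - {s}"
    using fs by (auto simp: h_def image_iff)
  have x_hx: "(x, h x) \<in> ?R" if "x \<in> S" for x
    using s by (auto simp: h_def intro: cycle_rel_step)
  have "?R `` {x} = ?R `` {y} \<longleftrightarrow> ?R' `` {h x} = ?R' `` {h y}" if "x \<in> S" "y \<in> S" for x y
  proof -
    have "(x, y) \<in> ?R \<longleftrightarrow> (h x, h y) \<in> ?R"
      using x_hx[OF that(1)] x_hx[OF that(2)] by (blast intro: cycle_rel_trans cycle_rel_sym)
    also have "\<dots> \<longleftrightarrow> (h x, h y) \<in> ?R'"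
      using cycle_rel_bypass_moved[of s S f, OF s fs] fs by (simp add: h_def)
    finally show ?thesis
      by (simp add: eq_equiv_class_iff[OF equiv_cycle_rel])
  qed
  hence "card ((\<lambda>x. ?R `` {x}) ` S) = card ((\<lambda>x. ?R' `` {x}) ` h ` S)"
    unfolding image_image by (rule card_image_eq_if_same_kernel)
  thus ?thesis
    by (simp add: cycle_count_def hS quotient_eq_image)
qed

lemma cycle_count_bypass:
  assumes "finite S" and "bij_betw f S S" and "s \<in> S"
  shows "cycle_count S f = cycle_count (S - {s}) (bypass s f) + of_bool (f s = s)"
  using assms cycle_count_bypass_fixpoint cycle_count_bypass_moved by fastforce

lemma cycle_count_comp_bypass_two:
  assumes fin: "finite S" and g: "bij_betw g S S" and h: "bij_betw h S S"
    and s: "s \<in> S" and t: "t \<in> S" "s \<noteq> t" and hs: "h s = s" and ht: "h t = t"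
  shows "cycle_count S (g \<circ> h)
    = cycle_count (S - {s, t}) (bypass t (bypass s g) \<circ> h) + of_bool (g s = s) + of_bool (bypass s g t = t)"
proof -
  have h': "bij_betw h (S - {s}) (S - {s})"
    using bij_betw_DiffI[OF h, of "{s}" "{s}"] hs s by auto
  have "cycle_count S (g \<circ> h) = cycle_count (S - {s}) (bypass s g \<circ> h) + of_bool (g s = s)"
    using cycle_count_bypass[OF fin bij_betw_trans[OF h g] s] hs by (simp add: bypass_comp)
  also have "cycle_count (S - {s}) (bypass s g \<circ> h)
      = cycle_count (S - {s, t}) (bypass t (bypass s g) \<circ> h) + of_bool (bypass s g t = t)"
    using cycle_count_bypass[OF _ bij_betw_trans[OF h' bij_betw_bypass[OF g s]], of t] fin t ht
    by (simp add: bypass_comp flip: Diff_insert2)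
  finally show ?thesis
    by (simp only: ac_simps)
qed

section \<open>Perfect matchings\<close>

definition perfect_matchings :: "'a set \<Rightarrow> ('a \<Rightarrow> 'a) set" where
  "perfect_matchings S =
     {m. (\<forall>x\<in>S. m x \<in> S \<and> m x \<noteq> x \<and> m (m x) = x) \<and> (\<forall>x. x \<notin> S \<longrightarrow> m x = x)}"

lemma perfect_matchingsD:
  "m \<in> perfect_matchings S \<Longrightarrow> x \<in> S \<Longrightarrow> m x \<in> S \<and> m x \<noteq> x \<and> m (m x) = x"
  unfolding perfect_matchings_def by auto

lemma perfect_matching_outside: "m \<in> perfect_matchings S \<Longrightarrow> x \<notin> S \<Longrightarrow> m x = x"
  unfolding perfect_matchings_def by auto

lemma perfect_matching_involution: "m \<in> perfect_matchings S \<Longrightarrow> m (m x) = x"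
  by (cases "x \<in> S") (simp_all add: perfect_matchingsD perfect_matching_outside)

lemma perfect_matching_bij_betw:
  assumes m: "m \<in> perfect_matchings A" and "A \<subseteq> B"
  shows "bij_betw m B B"
proof -
  have "m x \<in> B" if "x \<in> B" for x
    using that assms(2) perfect_matchingsD[OF m, of x] perfect_matching_outside[OF m, of x]
    by (cases "x \<in> A") auto
  hence "m ` B \<subseteq> B"
    by blast
  thus ?thesis
    by (intro bij_betw_byWitness[where f' = m]) (simp_all add: perfect_matching_involution[OF m])
qed

lemma finite_perfect_matchings:
  assumes "finite S"
  shows "finite (perfect_matchings S)"
proof -
  let ?r = "\<lambda>m x. if x \<in> S then m x else undefined"
  have "inj_on ?r (perfect_matchings S)"
  proof (rule inj_onI, rule ext)
    fix m m' x
    assume "m \<in> perfect_matchings S" "m' \<in> perfect_matchings S" "?r m = ?r m'"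
    thus "m x = m' x"
      by (cases "x \<in> S") (metis, simp add: perfect_matching_outside)
  qed
  moreover have "?r ` perfect_matchings S \<subseteq> {f. \<forall>x. (x \<in> S \<longrightarrow> f x \<in> S) \<and> (x \<notin> S \<longrightarrow> f x = undefined)}"
    using perfect_matchingsD by fastforce
  ultimately show ?thesis
    using finite_set_of_finite_funs[OF assms assms] finite_imageD finite_subset by blast
qed

lemma bij_betw_perfect_matchings_insert_pair:
  assumes s: "s \<in> S" and t: "t \<in> S" and st: "s \<noteq> t"
  shows "bij_betw (\<lambda>m. transpose s t \<circ> m) (perfect_matchings (S - {s, t}))
           {m \<in> perfect_matchings S. m s = t}"
proof -
  have "transpose s t \<circ> m \<in> perfect_matchings (S - {s, t})"
    if "m \<in> {m \<in> perfect_matchings S. m s = t}" for m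
  proof -
    have m: "m \<in> perfect_matchings S" and ms: "m s = t"
      using that by auto
    have mt: "m t = s"
      using perfect_matching_involution[OF m, of s] ms by simp
    have "m x \<in> S - {s, t} \<and> m x \<noteq> x" if "x \<in> S - {s, t}" for x
      using that perfect_matchingsD[OF m, of x] perfect_matching_involution[OF m, of x] ms mt by auto
    thus ?thesis
      using perfect_matching_involution[OF m] perfect_matching_outside[OF m] ms mt s t st
      unfolding perfect_matchings_def by (auto simp: transpose_def)
  qed
  moreover have "transpose s t \<circ> m \<in> {m \<in> perfect_matchings S. m s = t}"
    if m: "m \<in> perfect_matchings (S - {s, t})" for m
    using perfect_matchingsD[OF m] perfect_matching_involution[OF m] perfect_matching_outside[OF m] s t st
    unfolding perfect_matchings_def by (auto simp: transpose_def)
  ultimately show ?thesis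
    by (intro bij_betw_byWitness[where f' = "\<lambda>m. transpose s t \<circ> m"]) (auto simp: fun_eq_iff)
qed

lemma sum_perfect_matchings_by_partner:
  assumes fin: "finite S" and s: "s \<in> S"
  shows "(\<Sum>m\<in>perfect_matchings S. F m)
    = (\<Sum>t\<in>S - {s}. \<Sum>m\<in>perfect_matchings (S - {s, t}). F (transpose s t \<circ> m))"
proof -
  have "(\<lambda>m. m s) ` perfect_matchings S \<subseteq> S - {s}"
    using perfect_matchingsD s by fastforce
  hence "(\<Sum>m\<in>perfect_matchings S. F m)
      = (\<Sum>t\<in>S - {s}. \<Sum>m\<in>{m \<in> perfect_matchings S. m s = t}. F m)"
    by (intro sum.group[symmetric] finite_perfect_matchings fin finite_Diff)
  also have "\<dots> = (\<Sum>t\<in>S - {s}. \<Sum>m\<in>perfect_matchings (S - {s, t}). F (transpose s t \<circ> m))"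
    using bij_betw_perfect_matchings_insert_pair[OF s] by (intro sum.cong refl sum.reindex_bij_betw[symmetric]) auto
  finally show ?thesis .
qed

lemma card_Diff_doubleton:
  assumes "finite S" and "s \<in> S" and "t \<in> S" and "s \<noteq> t"
  shows "card (S - {s, t}) = card S - 2"
  using assms by (simp add: card_Diff_subset)

lemma card_perfect_matchings:
  assumes "finite S" and "card S = 2 * N"
  shows "card (perfect_matchings S) = (\<Prod>k<N. 2 * k + 1)"
  using assms
proof (induction N arbitrary: S)
  case 0
  hence "perfect_matchings S = {id}"
    by (auto simp: perfect_matchings_def)
  thus ?case
    by simp
next
  case (Suc N)
  then obtain s where s: "s \<in> S"
    by fastforce
  have "card (perfect_matchings S) = (\<Sum>t\<in>S - {s}. card (perfect_matchings (S - {s, t})))"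
    using sum_perfect_matchings_by_partner[OF Suc.prems(1) s, of "\<lambda>_. 1"] by (simp only: card_eq_sum)
  also have "\<dots> = (\<Sum>t\<in>S - {s}. \<Prod>k<N. 2 * k + 1)"
  proof (rule sum.cong[OF refl])
    fix t assume "t \<in> S - {s}"
    hence "card (S - {s, t}) = 2 * N"
      using card_Diff_doubleton[OF Suc.prems(1) s, of t] Suc.prems(2) by auto
    thus "card (perfect_matchings (S - {s, t})) = (\<Prod>k<N. 2 * k + 1)"
      using Suc.prems(1) by (intro Suc.IH) simp_all
  qed
  also have "\<dots> = (\<Prod>k<Suc N. 2 * k + 1)"
    using Suc s by simp
  finally show ?case .
qed

section \<open>Gluing two elements\<close>

definition glue_reduce :: "('a \<Rightarrow> 'a) \<Rightarrow> 'a \<Rightarrow> 'a \<Rightarrow> 'a \<Rightarrow> 'a" where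
  "glue_reduce \<rho> s t = bypass t (bypass s (\<rho> \<circ> transpose s t))"

(* The cycles of rho o m inside {s, t}, when m s = t. *)
definition glue_closed :: "('a \<Rightarrow> 'a) \<Rightarrow> 'a \<Rightarrow> 'a \<Rightarrow> nat" where
  "glue_closed \<rho> s t = of_bool (\<rho> t = s) + of_bool (bypass s (\<rho> \<circ> transpose s t) t = t)"

lemma bij_betw_glue_reduce:
  assumes "bij_betw \<rho> S S" and "s \<in> S" and "t \<in> S" and "s \<noteq> t"
  shows "bij_betw (glue_reduce \<rho> s t) (S - {s, t}) (S - {s, t})"
proof -
  have "bij_betw (\<rho> \<circ> transpose s t) S S"
    using assms by (intro bij_betw_trans[OF _ assms(1)]) simp
  hence "bij_betw (bypass s (\<rho> \<circ> transpose s t)) (S - {s}) (S - {s})"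
    using assms(2) by (rule bij_betw_bypass)
  thus ?thesis
    using bij_betw_bypass[of _ "S - {s}" t] assms(3,4)
    by (simp add: glue_reduce_def flip: Diff_insert2)
qed

lemma cycle_count_glue:
  assumes fin: "finite S" and \<rho>: "bij_betw \<rho> S S" and s: "s \<in> S" and t: "t \<in> S" "s \<noteq> t"
    and m: "m \<in> perfect_matchings (S - {s, t})"
  shows "cycle_count S (\<rho> \<circ> (transpose s t \<circ> m))
    = cycle_count (S - {s, t}) (glue_reduce \<rho> s t \<circ> m) + glue_closed \<rho> s t"
proof -
  have g: "bij_betw (\<rho> \<circ> transpose s t) S S"
    using s t by (intro bij_betw_trans[OF _ \<rho>]) simp
  have h: "bij_betw m S S"
    using m by (rule perfect_matching_bij_betw) auto
  have "m s = s" and "m t = t"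
    using perfect_matching_outside[OF m] by auto
  from cycle_count_comp_bypass_two[OF fin g h s t this]
  show ?thesis
    unfolding glue_reduce_def glue_closed_def comp_assoc
    by (simp only: comp_apply transpose_apply_first add.assoc)
qed

lemma sum_cycle_count_perfect_matchings:
  assumes fin: "finite S" and \<rho>: "bij_betw \<rho> S S" and s: "s \<in> S"
  shows "(\<Sum>m\<in>perfect_matchings S. cycle_count S (\<rho> \<circ> m))
    = (\<Sum>t\<in>S - {s}. (\<Sum>m\<in>perfect_matchings (S - {s, t}). cycle_count (S - {s, t}) (glue_reduce \<rho> s t \<circ> m))
                     + card (perfect_matchings (S - {s, t})) * glue_closed \<rho> s t)"
proof -
  have "(\<Sum>m\<in>perfect_matchings (S - {s, t}). cycle_count S (\<rho> \<circ> (transpose s t \<circ> m)))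
      = (\<Sum>m\<in>perfect_matchings (S - {s, t}). cycle_count (S - {s, t}) (glue_reduce \<rho> s t \<circ> m)
                                             + glue_closed \<rho> s t)" if "t \<in> S - {s}" for t
    using that by (intro sum.cong refl cycle_count_glue[OF fin \<rho> s]) auto
  thus ?thesis
    by (simp add: sum_perfect_matchings_by_partner[OF fin s] sum.distrib)
qed

definition fixpoint_count :: "'a set \<Rightarrow> ('a \<Rightarrow> 'a) \<Rightarrow> nat" where
  "fixpoint_count S f = card {x \<in> S. f x = x}"

lemma fixpoint_count_glue_at_fixpoint:
  assumes fin: "finite S" and inj: "inj_on \<rho> S" and s: "s \<in> S" and t: "t \<in> S" "s \<noteq> t"
    and \<rho>s: "\<rho> s = s"
  shows "fixpoint_count (S - {s, t}) (glue_reduce \<rho> s t) + 2 * glue_closed \<rho> s t \<le> fixpoint_count S \<rho>"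
proof -
  let ?F = "{x \<in> S. \<rho> x = x}"
  have \<rho>_ne_s: "\<rho> x \<noteq> s" if "x \<in> S" "x \<noteq> s" for x
    using inj_onD[OF inj, of x s] that s \<rho>s by auto
  \<comment> \<open>Gluing to a fixed point \<open>s\<close> of \<open>\<rho>\<close> only cuts \<open>t\<close> out of its cycle.\<close>
  have reduce: "glue_reduce \<rho> s t x = bypass t \<rho> x" if "x \<in> S - {s, t}" for x
    using that t \<rho>s \<rho>_ne_s by (simp add: glue_reduce_def bypass_def transpose_def)
  have closed: "glue_closed \<rho> s t = of_bool (\<rho> t = t)"
    using t \<rho>s \<rho>_ne_s by (simp add: glue_closed_def bypass_def)
  show ?thesis
  proof (cases "\<rho> t = t")
    case True
    have "{x \<in> S - {s, t}. glue_reduce \<rho> s t x = x} \<subseteq> ?F - {s, t}"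
      using reduce True inj t by (auto simp: bypass_def inj_on_def split: if_splits)
    hence "fixpoint_count (S - {s, t}) (glue_reduce \<rho> s t) \<le> card (?F - {s, t})"
      unfolding fixpoint_count_def using fin by (intro card_mono) auto
    moreover have "{s, t} \<subseteq> ?F" and "card {s, t} = 2"
      using s t \<rho>s True by auto
    moreover from this have "2 \<le> card ?F"
      using card_mono[of ?F "{s, t}"] fin by simp
    ultimately show ?thesis
      using True fin by (simp add: closed fixpoint_count_def card_Diff_subset)
  next
    case False
    have "{x \<in> S - {s, t}. glue_reduce \<rho> s t x = x} \<subseteq> insert (\<rho> t) (?F - {s})"
      using reduce by (auto simp: bypass_def split: if_splits)
    hence "fixpoint_count (S - {s, t}) (glue_reduce \<rho> s t) \<le> card (insert (\<rho> t) (?F - {s}))"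
      unfolding fixpoint_count_def using fin by (intro card_mono) auto
    also have "\<dots> \<le> Suc (card (?F - {s}))"
      using fin by (simp add: card_insert_if)
    also have "\<dots> = card ?F"
      by (rule card_Suc_Diff1) (use fin s \<rho>s in auto)
    finally show ?thesis
      using False by (simp add: closed fixpoint_count_def)
  qed
qed

lemma glue_closed_if_moved: "\<rho> s \<noteq> s \<Longrightarrow> glue_closed \<rho> s t = of_bool (\<rho> t = s) + of_bool (\<rho> s = t)"
  by (simp add: glue_closed_def bypass_def)

lemma fixpoint_count_glue_fixpoint_free:
  assumes free: "\<And>x. x \<in> S \<Longrightarrow> \<rho> x \<noteq> x" and s: "s \<in> S" and t: "t \<in> S"
  shows "fixpoint_count (S - {s, t}) (glue_reduce \<rho> s t) \<le> of_bool (\<rho> (\<rho> t) = s) + of_bool (\<rho> (\<rho> s) = t)"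
proof -
  have "{x \<in> S - {s, t}. glue_reduce \<rho> s t x = x}
      \<subseteq> (if \<rho> (\<rho> t) = s then {\<rho> t} else {}) \<union> (if \<rho> (\<rho> s) = t then {\<rho> s} else {})"
    using free[OF s] free[OF t] free by (auto simp: glue_reduce_def bypass_def transpose_def split: if_splits)
  hence "fixpoint_count (S - {s, t}) (glue_reduce \<rho> s t)
      \<le> card ((if \<rho> (\<rho> t) = s then {\<rho> t} else {}) \<union> (if \<rho> (\<rho> s) = t then {\<rho> s} else {}))"
    unfolding fixpoint_count_def by (intro card_mono) auto
  also have "\<dots> \<le> card (if \<rho> (\<rho> t) = s then {\<rho> t} else {}) + card (if \<rho> (\<rho> s) = t then {\<rho> s} else {})"
    by (rule card_Un_le)
  finally show ?thesis
    by (cases "\<rho> (\<rho> t) = s"; cases "\<rho> (\<rho> s) = t") simp_all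
qed

lemma sum_of_bool_eq_le_one:
  assumes "finite A" and "inj_on f A"
  shows "(\<Sum>x\<in>A. of_bool (f x = c)) \<le> (1 :: 'b :: linordered_semidom)"
proof -
  have "card (A \<inter> {x. f x = c}) \<le> 1"
    using assms by (auto simp: card_le_Suc0_iff_eq inj_on_def)
  thus ?thesis
    using assms(1) by (metis of_nat_1 of_nat_mono sum_of_bool_eq)
qed

lemma sum_glue_at_fixpoint_le:
  assumes fin: "finite S" and inj: "inj_on \<rho> S" and s: "s \<in> S" and \<rho>s: "\<rho> s = s"
  shows "(\<Sum>t\<in>S - {s}. real (fixpoint_count (S - {s, t}) (glue_reduce \<rho> s t)) / 2 + real (glue_closed \<rho> s t))
    \<le> real (card (S - {s})) * (real (fixpoint_count S \<rho>) / 2)"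
proof (rule sum_bounded_above)
  fix t assume "t \<in> S - {s}"
  hence "fixpoint_count (S - {s, t}) (glue_reduce \<rho> s t) + 2 * glue_closed \<rho> s t \<le> fixpoint_count S \<rho>"
    using fixpoint_count_glue_at_fixpoint[OF fin inj s _ _ \<rho>s, of t] by auto
  from of_nat_mono[OF this, where 'a = real]
  show "real (fixpoint_count (S - {s, t}) (glue_reduce \<rho> s t)) / 2 + real (glue_closed \<rho> s t)
      \<le> real (fixpoint_count S \<rho>) / 2"
    by simp
qed

lemma sum_glue_fixpoint_free_le:
  assumes fin: "finite S" and \<rho>: "bij_betw \<rho> S S" and s: "s \<in> S" and free: "\<And>x. x \<in> S \<Longrightarrow> \<rho> x \<noteq> x"
  shows "(\<Sum>t\<in>S - {s}. real (fixpoint_count (S - {s, t}) (glue_reduce \<rho> s t)) / 2 + real (glue_closed \<rho> s t)) \<le> 3"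
proof -
  let ?T = "S - {s}"
  have inj: "inj_on \<rho> S" and \<rho>S: "\<rho> ` S = S"
    using \<rho> by (auto simp: bij_betw_def)
  have "(\<Sum>t\<in>?T. real (fixpoint_count (S - {s, t}) (glue_reduce \<rho> s t)) / 2 + real (glue_closed \<rho> s t))
      \<le> (\<Sum>t\<in>?T. (of_bool (\<rho> (\<rho> t) = s) + of_bool (\<rho> (\<rho> s) = t)) / 2
                   + (of_bool (\<rho> t = s) + of_bool (\<rho> s = t)))"
  proof (rule sum_mono)
    fix t assume "t \<in> ?T"
    from of_nat_mono[OF fixpoint_count_glue_fixpoint_free[OF free s], of t, where 'a = real]
    have "real (fixpoint_count (S - {s, t}) (glue_reduce \<rho> s t))
        \<le> of_bool (\<rho> (\<rho> t) = s) + of_bool (\<rho> (\<rho> s) = t)"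
      using \<open>t \<in> ?T\<close> by (simp only: of_nat_add of_nat_of_bool) simp
    thus "real (fixpoint_count (S - {s, t}) (glue_reduce \<rho> s t)) / 2 + real (glue_closed \<rho> s t)
        \<le> (of_bool (\<rho> (\<rho> t) = s) + of_bool (\<rho> (\<rho> s) = t)) / 2 + (of_bool (\<rho> t = s) + of_bool (\<rho> s = t))"
      by (simp only: glue_closed_if_moved[of \<rho> s, OF free[OF s]] of_nat_add of_nat_of_bool) simp
  qed
  also have "\<dots> = ((\<Sum>t\<in>?T. of_bool (\<rho> (\<rho> t) = s)) + (\<Sum>t\<in>?T. of_bool (t = \<rho> (\<rho> s)))) / 2
      + ((\<Sum>t\<in>?T. of_bool (\<rho> t = s)) + (\<Sum>t\<in>?T. of_bool (t = \<rho> s)))"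
    by (simp add: sum.distrib eq_commute[of "\<rho> _"] flip: sum_divide_distrib)
  also have "\<dots> \<le> (1 + 1) / 2 + (1 + 1)"
  proof -
    have "inj_on (\<lambda>t. \<rho> (\<rho> t)) ?T"
      using comp_inj_on[of \<rho> ?T \<rho>] inj \<rho>S by (auto simp: o_def intro: inj_on_subset)
    moreover have "inj_on \<rho> ?T"
      using inj by (rule inj_on_subset) auto
    ultimately show ?thesis
      using fin by (intro add_mono divide_right_mono sum_of_bool_eq_le_one) auto
  qed
  finally show ?thesis
    by simp
qed

lemma sum_glue_fixpoints_closed_le:
  assumes fin: "finite S" and \<rho>: "bij_betw \<rho> S S" and s: "s \<in> S"
    and choice: "(\<exists>x\<in>S. \<rho> x = x) \<Longrightarrow> \<rho> s = s"
  shows "(\<Sum>t\<in>S - {s}. real (fixpoint_count (S - {s, t}) (glue_reduce \<rho> s t)) / 2 + real (glue_closed \<rho> s t))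
    \<le> 3 + real (card (S - {s})) * (real (fixpoint_count S \<rho>) / 2)"
proof (cases "\<rho> s = s")
  case True
  have "inj_on \<rho> S"
    using \<rho> by (simp add: bij_betw_def)
  thus ?thesis
    using sum_glue_at_fixpoint_le[of S \<rho> s, OF fin _ s True] by simp
next
  case False
  hence "\<And>x. x \<in> S \<Longrightarrow> \<rho> x \<noteq> x"
    using choice by blast
  from sum_glue_fixpoint_free_le[OF fin \<rho> s this]
  show ?thesis
    by (simp add: add_increasing2)
qed

section \<open>The expected number of cycles\<close>

definition odd_harm :: "nat \<Rightarrow> real" where
  "odd_harm N = (\<Sum>k<N. 1 / (2 * real k + 1))"

lemma sum_cycle_count_perfect_matchings_le:
  assumes "finite S" and "card S = 2 * N" and "bij_betw \<rho> S S"
  shows "(\<Sum>m\<in>perfect_matchings S. real (cycle_count S (\<rho> \<circ> m)))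
    \<le> real (card (perfect_matchings S)) * (3 * odd_harm N + real (fixpoint_count S \<rho>) / 2)"
  using assms
proof (induction N arbitrary: S \<rho>)
  case 0
  hence "S = {}" and "perfect_matchings S = {id}"
    by (auto simp: perfect_matchings_def)
  thus ?case
    by (simp add: cycle_count_def odd_harm_def)
next
  case (Suc N)
  note fin = Suc.prems(1) and \<rho> = Suc.prems(3)
  have "S \<noteq> {}"
    using Suc.prems(2) by auto
  then obtain s where s: "s \<in> S" and choice: "(\<exists>x\<in>S. \<rho> x = x) \<Longrightarrow> \<rho> s = s"
    by (cases "\<exists>x\<in>S. \<rho> x = x") blast+
  let ?T = "S - {s}" and ?K = "\<Prod>k<N. 2 * k + 1"
  let ?cycles = "\<lambda>t. \<Sum>m\<in>perfect_matchings (S - {s, t}). real (cycle_count (S - {s, t}) (glue_reduce \<rho> s t \<circ> m))"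
  let ?fix = "\<lambda>t. real (fixpoint_count (S - {s, t}) (glue_reduce \<rho> s t))"
  have card_T: "card ?T = 2 * N + 1"
    using Suc.prems s by simp
  have card_St: "card (S - {s, t}) = 2 * N" if "t \<in> ?T" for t
    using card_Diff_doubleton[OF fin s] that Suc.prems(2) by auto
  have K: "card (perfect_matchings (S - {s, t})) = ?K" if "t \<in> ?T" for t
    using card_perfect_matchings[OF _ card_St[OF that]] fin by simp
  have "(\<Sum>m\<in>perfect_matchings S. real (cycle_count S (\<rho> \<circ> m)))
      = (\<Sum>t\<in>?T. ?cycles t + real (card (perfect_matchings (S - {s, t}))) * real (glue_closed \<rho> s t))"
    using sum_cycle_count_perfect_matchings[OF fin \<rho> s, THEN arg_cong[where f = real]]
    by (simp add: sum.distrib)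
  also have "\<dots> \<le> (\<Sum>t\<in>?T. real ?K * (3 * odd_harm N + ?fix t / 2) + real ?K * real (glue_closed \<rho> s t))"
  proof (rule sum_mono)
    fix t assume t: "t \<in> ?T"
    have "?cycles t \<le> real (card (perfect_matchings (S - {s, t}))) * (3 * odd_harm N + ?fix t / 2)"
      using t by (intro Suc.IH card_St bij_betw_glue_reduce[OF \<rho> s]) (use fin in auto)
    thus "?cycles t + real (card (perfect_matchings (S - {s, t}))) * real (glue_closed \<rho> s t)
        \<le> real ?K * (3 * odd_harm N + ?fix t / 2) + real ?K * real (glue_closed \<rho> s t)"
      unfolding K[OF t] by simp
  qed
  also have "\<dots> = real ?K * (real (card ?T) * (3 * odd_harm N) + (\<Sum>t\<in>?T. ?fix t / 2 + real (glue_closed \<rho> s t)))"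
    by (simp add: sum.distrib sum_distrib_left sum_distrib_right algebra_simps)
  also have "\<dots> \<le> real ?K * (real (card ?T) * (3 * odd_harm N) + (3 + real (card ?T) * (real (fixpoint_count S \<rho>) / 2)))"
    using sum_glue_fixpoints_closed_le[OF fin \<rho> s choice] by (intro mult_left_mono add_left_mono) (simp_all del: of_nat_prod)
  also have "\<dots> = real (card (perfect_matchings S)) * (3 * odd_harm (Suc N) + real (fixpoint_count S \<rho>) / 2)"
    using card_perfect_matchings[OF fin Suc.prems(2)] card_T
    by (simp add: odd_harm_def field_simps)
  finally show ?case .
qed

lemma odd_harm_Suc: "odd_harm (Suc N) = odd_harm N + 1 / (2 * real N + 1)"
  by (simp add: odd_harm_def)

lemma odd_harm_le_ln:
  assumes "1 \<le> N"
  shows "odd_harm N \<le> 1 + ln (2 * real N - 1) / 2"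
  using assms
proof (induction N rule: dec_induct)
  case base
  show ?case
    by (simp add: odd_harm_def)
next
  case (step N)
  have "ln (2 * real N - 1) - ln (2 * real N + 1) \<le> ((2 * real N - 1) - (2 * real N + 1)) / (2 * real N + 1)"
    using step.hyps by (intro ln_diff_le) auto
  hence "1 / (2 * real N + 1) \<le> (ln (2 * real N + 1) - ln (2 * real N - 1)) / 2"
    by (simp add: field_simps)
  moreover have "2 * real (Suc N) - 1 = 2 * real N + 1"
    by simp
  ultimately show ?case
    using step.IH unfolding odd_harm_Suc by (simp only:) argo
qed

lemma three_odd_harm_le_ln: "3 * odd_harm (3 * k) \<le> 3 / 2 * ln (real (2 * k)) + 6"
proof (cases "k = 0")
  case True
  thus ?thesis
    by (simp add: odd_harm_def)
next
  case False
  have "odd_harm (3 * k) \<le> 1 + ln (6 * real k - 1) / 2"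
    using odd_harm_le_ln[of "3 * k"] False by simp
  also have "ln (6 * real k - 1) \<le> ln (3 * real (2 * k))"
    using False by (subst ln_le_cancel_iff) auto
  also have "\<dots> = ln 3 + ln (real (2 * k))"
    by (rule ln_mult_pos) (use False in auto)
  also have "ln (3 :: real) \<le> 2"
    using ln_le_minus_one[of 3] by simp
  finally have "odd_harm (3 * k) \<le> 1 + (2 + ln (real (2 * k))) / 2"
    by simp
  thus ?thesis
    by argo
qed

section \<open>Triangulated surfaces\<close>

definition next_side :: "nat \<times> nat \<Rightarrow> nat \<times> nat" where
  "next_side = (\<lambda>(i, j). (i, (j + 1) mod 3))"

lemma next_side_apply: "next_side p = (fst p, (snd p + 1) mod 3)"
  by (cases p) (simp add: next_side_def)

lemma bij_betw_next_side: "bij_betw next_side (tri_sides n) (tri_sides n)"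
proof (rule bij_betw_byWitness[where f' = "\<lambda>(i, j). (i, (j + 2) mod 3)"])
  have "((j + 1) mod 3 + 2) mod 3 = j" and "((j + 2) mod 3 + 1) mod 3 = j" if "j < 3" for j :: nat
    using that by presburger+
  thus "\<forall>p\<in>tri_sides n. (\<lambda>(i, j). (i, (j + 2) mod 3)) (next_side p) = p"
    and "\<forall>p\<in>tri_sides n. next_side ((\<lambda>(i, j). (i, (j + 2) mod 3)) p) = p"
    by (auto simp: tri_sides_def next_side_def)
qed (auto simp: tri_sides_def next_side_def)

lemma fixpoint_count_next_side: "fixpoint_count (tri_sides n) next_side = 0"
proof -
  have "(j + 1) mod 3 \<noteq> j" for j :: nat
    by presburger
  hence "{p \<in> tri_sides n. next_side p = p} = {}"
    by (auto simp: next_side_apply)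
  thus ?thesis
    unfolding fixpoint_count_def by (metis card.empty)
qed

lemma side_matchings_eq: "side_matchings n = perfect_matchings (tri_sides n)"
  unfolding side_matchings_def perfect_matchings_def ..

lemma glue_rel_eq_graph:
  assumes m: "m \<in> perfect_matchings (tri_sides n)"
  shows "glue_rel n m = graph_on (tri_sides n) (next_side \<circ> m) \<union> (graph_on (tri_sides n) (next_side \<circ> m))\<inverse>"
proof -
  let ?S = "tri_sides n"
  have "{((i, j), (fst (m (i, j)), (snd (m (i, j)) + 1) mod 3)) | i j. (i, j) \<in> ?S}
      = graph_on ?S (next_side \<circ> m)"
    unfolding graph_on_def next_side_apply by force
  moreover have "{((i, (j + 1) mod 3), m (i, j)) | i j. (i, j) \<in> ?S} = (graph_on ?S (next_side \<circ> m))\<inverse>"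
  proof -
    have "{((i, (j + 1) mod 3), m (i, j)) | i j. (i, j) \<in> ?S} = {(next_side y, m y) | y. y \<in> ?S}"
      unfolding next_side_apply by force
    also have "\<dots> = {(next_side (m x), x) | x. x \<in> ?S}"
      using perfect_matchingsD[OF m] by (metis (no_types, opaque_lifting))
    finally show ?thesis
      by (auto simp: graph_on_def)
  qed
  ultimately show ?thesis
    unfolding glue_rel_def by argo
qed

(* Corner (i, j) is the initial corner of side (i, j), so corners and sides share an index set. *)
lemma num_vertices_eq_cycle_count:
  assumes "m \<in> perfect_matchings (tri_sides n)"
  shows "num_vertices n m = cycle_count (tri_sides n) (next_side \<circ> m)"
proof -
  have "glue_rel n m \<union> (glue_rel n m)\<inverse> = glue_rel n m"
    by (auto simp: glue_rel_eq_graph[OF assms])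
  thus ?thesis
    by (simp add: num_vertices_def surface_vertices_def cycle_count_def cycle_rel_def
        glue_rel_eq_graph[OF assms] tri_corners_def tri_sides_def)
qed

lemma expected_vertices_le_odd_harm: "expected_vertices (2 * k) \<le> 3 * odd_harm (3 * k)"
proof -
  let ?S = "tri_sides (2 * k)"
  have fin: "finite ?S" and card_S: "card ?S = 2 * (3 * k)"
    by (simp_all add: tri_sides_def)
  have "(\<Sum>m\<in>perfect_matchings ?S. real (cycle_count ?S (next_side \<circ> m)))
      \<le> real (card (perfect_matchings ?S)) * (3 * odd_harm (3 * k))"
    using sum_cycle_count_perfect_matchings_le[OF fin card_S bij_betw_next_side]
    by (simp add: fixpoint_count_next_side)
  moreover have "card (perfect_matchings ?S) > 0"
    by (simp add: card_perfect_matchings[OF fin card_S])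
  ultimately show ?thesis
    by (simp add: expected_vertices_def side_matchings_eq num_vertices_eq_cycle_count
        divide_le_eq mult.commute)
qed

theorem theorem2p1:
  fixes n :: nat
  assumes "even n"
  shows "expected_vertices n \<le> 3 / 2 * ln (real n) + 6"
proof -
  obtain k where "n = 2 * k"
    using assms by blast
  thus ?thesis
    using expected_vertices_le_odd_harm[of k] three_odd_harm_le_ln[of k] by simp
qed

end
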